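(* Let $\mathcal G$ be a finite connected groupoid and $\alpha=(S_g,\alpha_g)_{g\in\mathcal G}$ a unital group-type partial action of $\mathcal G$ on a ring $S=\bigoplus_{y\in\mathcal G_0}S_y$, with $S_g=S1_g$. Let $x\in\mathcal G_0$ and $\tau=\{\tau_y\}_{y\in\mathcal G_0}$ a transversal in $\mathcal G$ for $x$ with $S_{\tau_y^{-1}}=S_x$ and $S_{\tau_y}=S_y$ for all $y\in\mathcal G_0$, and put $\tau(g)=\tau_{t(g)}^{-1}g\tau_{s(g)}\in\mathcal G(x)$ for $g\in\mathcal G$. Every $a\in S$ can be written uniquely as $a=\sum_{y\in\mathcal G_0}\alpha_{\tau_y}(a_{x,y})$ with $a_{x,y}\in S_x$. Then $a\in S^{\alpha_{\mathcal G}}$ if and only if $$\alpha_{\tau(g)}\big(a_{x,s(g)}1_{\tau(g)^{-1}}\big)=a_{x,t(g)}1_{\tau(g)}\quad\text{for all }g\in\mathcal G.$$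
   Context: A groupoid is a small category with all morphisms invertible; $\mathcal G_0$ is the set of objects (identified with identity morphisms), $s(g),t(g)$ source and target, $\mathcal G(x,y)=\{g:s(g)=x,t(g)=y\}$, $\mathcal G(x)=\mathcal G(x,x)$ the isotropy group; $gh$ is defined iff $s(g)=t(h)$; connected means $\mathcal G(x,y)\neq\emptyset$ for all $x,y$. A partial action $\alpha=(S_g,\alpha_g)_{g\in\mathcal G}$ on a ring $S$: for each $g$, $S_{t(g)}$ is an ideal of $S$, $S_g$ an ideal of $S_{t(g)}$, $\alpha_g:S_{g^{-1}}\to S_g$ a ring isomorphism; $\alpha_x=\mathrm{id}_{S_x}$ for $x\in\mathcal G_0$; for composable $(g,h)$, $\alpha_h^{-1}(S_{g^{-1}}\cap S_h)\subseteq S_{(gh)^{-1}}$ and $\alpha_g\alpha_h(a)=\alpha_{gh}(a)$ there. Unital: $S_g=S1_g$ with $1_g$ a central idempotent. A transversal in $\mathcal G$ for $x$ is a family $\{\tau_y\}_{y\in\mathcal G_0}$ with $\tau_y\in\mathcal G(x,y)$ and $\tau_x=x$. For connected $\mathcal G$, $\alpha$ is group-type if there exist $x\in\mathcal G_0$ and a transversal $\tau$ for $x$ with $S_{\tau_y^{-1}}=S_x$ and $S_{\tau_y}=S_y$ for all $y$. The invariant subring is $S^{\alpha_{\mathcal G}}=\{a\in S:\alpha_g(a1_{g^{-1}})=a1_g\ \forall g\in\mathcal G\}$. *)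

theory Defs
  imports Main
begin

text \<open>A groupoid is given by a set G of morphisms (objects are identified with
identity morphisms), source s, target t, a composition m (m g h = gh, defined
when s g = t h) and an inversion i.\<close>

definition groupoid ::
  "'g set \<Rightarrow> ('g \<Rightarrow> 'g) \<Rightarrow> ('g \<Rightarrow> 'g) \<Rightarrow> ('g \<Rightarrow> 'g \<Rightarrow> 'g) \<Rightarrow> ('g \<Rightarrow> 'g) \<Rightarrow> bool" where
  "groupoid G s t m i \<longleftrightarrow>
     (\<forall>g\<in>G. s g \<in> G \<and> t g \<in> G \<and> s (s g) = s g \<and> t (s g) = s g
             \<and> s (t g) = t g \<and> t (t g) = t g) \<and>
     (\<forall>g\<in>G. \<forall>h\<in>G. s g = t h \<longrightarrow> m g h \<in> G \<and> s (m g h) = s h \<and> t (m g h) = t g) \<and>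
     (\<forall>g\<in>G. \<forall>h\<in>G. \<forall>k\<in>G. s g = t h \<longrightarrow> s h = t k \<longrightarrow> m (m g h) k = m g (m h k)) \<and>
     (\<forall>g\<in>G. m (t g) g = g \<and> m g (s g) = g) \<and>
     (\<forall>g\<in>G. i g \<in> G \<and> s (i g) = t g \<and> t (i g) = s g \<and> m g (i g) = t g \<and> m (i g) g = s g)"

definition objects :: "'g set \<Rightarrow> ('g \<Rightarrow> 'g) \<Rightarrow> 'g set" where
  "objects G s = s ` G"

definition connected_groupoid ::
  "'g set \<Rightarrow> ('g \<Rightarrow> 'g) \<Rightarrow> ('g \<Rightarrow> 'g) \<Rightarrow> bool" where
  "connected_groupoid G s t \<longleftrightarrow>
     (\<forall>x\<in>objects G s. \<forall>y\<in>objects G s. \<exists>g\<in>G. s g = x \<and> t g = y)"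

section \<open>Ideals in a ring (the ring S is the whole type 'r)\<close>

text \<open>I is an ideal of the subring J (J = UNIV means: ideal of S).\<close>
definition ideal_of :: "'r::ring set \<Rightarrow> 'r set \<Rightarrow> bool" where
  "ideal_of I J \<longleftrightarrow> I \<subseteq> J \<and> 0 \<in> I \<and>
     (\<forall>a\<in>I. \<forall>b\<in>I. a + b \<in> I \<and> a - b \<in> I) \<and>
     (\<forall>a\<in>I. \<forall>j\<in>J. j * a \<in> I \<and> a * j \<in> I)"

definition central_idempotent :: "'r::ring \<Rightarrow> bool" where
  "central_idempotent e \<longleftrightarrow> e * e = e \<and> (\<forall>a. a * e = e * a)"

definition partial_action ::
  "'g set \<Rightarrow> ('g \<Rightarrow> 'g) \<Rightarrow> ('g \<Rightarrow> 'g) \<Rightarrow> ('g \<Rightarrow> 'g \<Rightarrow> 'g) \<Rightarrow> ('g \<Rightarrow> 'g)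
   \<Rightarrow> ('g \<Rightarrow> 'r::ring set) \<Rightarrow> ('g \<Rightarrow> 'r \<Rightarrow> 'r) \<Rightarrow> bool" where
  "partial_action G s t m i Sg \<alpha> \<longleftrightarrow>
     (\<forall>g\<in>G. ideal_of (Sg (t g)) UNIV \<and> ideal_of (Sg g) (Sg (t g))) \<and>
     (\<forall>g\<in>G. bij_betw (\<alpha> g) (Sg (i g)) (Sg g) \<and>
            (\<forall>a\<in>Sg (i g). \<forall>b\<in>Sg (i g).
               \<alpha> g (a + b) = \<alpha> g a + \<alpha> g b \<and> \<alpha> g (a * b) = \<alpha> g a * \<alpha> g b)) \<and>
     (\<forall>x\<in>objects G s. \<forall>a\<in>Sg x. \<alpha> x a = a) \<and>
     (\<forall>g\<in>G. \<forall>h\<in>G. s g = t h \<longrightarrow>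
        (\<forall>a\<in>Sg (i h). \<alpha> h a \<in> Sg (i g) \<longrightarrow>
            a \<in> Sg (i (m g h)) \<and> \<alpha> g (\<alpha> h a) = \<alpha> (m g h) a))"

definition unital_partial_action ::
  "'g set \<Rightarrow> ('g \<Rightarrow> 'r::ring set) \<Rightarrow> ('g \<Rightarrow> 'r) \<Rightarrow> bool" where
  "unital_partial_action G Sg one \<longleftrightarrow>
     (\<forall>g\<in>G. central_idempotent (one g) \<and> Sg g = {a * one g | a. True})"

definition transversal ::
  "'g set \<Rightarrow> ('g \<Rightarrow> 'g) \<Rightarrow> ('g \<Rightarrow> 'g) \<Rightarrow> 'g \<Rightarrow> ('g \<Rightarrow> 'g) \<Rightarrow> bool" where
  "transversal G s t x \<tau> \<longleftrightarrow>
     (\<forall>y\<in>objects G s. \<tau> y \<in> G \<and> s (\<tau> y) = x \<and> t (\<tau> y) = y) \<and> \<tau> x = x"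

definition group_type ::
  "'g set \<Rightarrow> ('g \<Rightarrow> 'g) \<Rightarrow> ('g \<Rightarrow> 'g) \<Rightarrow> ('g \<Rightarrow> 'g) \<Rightarrow> ('g \<Rightarrow> 'r set) \<Rightarrow> bool" where
  "group_type G s t i Sg \<longleftrightarrow>
     (\<exists>x\<in>objects G s. \<exists>\<tau>. transversal G s t x \<tau> \<and>
        (\<forall>y\<in>objects G s. Sg (i (\<tau> y)) = Sg x \<and> Sg (\<tau> y) = Sg y))"

definition internal_direct_sum :: "'g set \<Rightarrow> ('g \<Rightarrow> 'r::ring set) \<Rightarrow> bool" where
  "internal_direct_sum Y Sg \<longleftrightarrow>
     (\<forall>a. \<exists>!f. (\<forall>y\<in>Y. f y \<in> Sg y) \<and> (\<forall>y. y \<notin> Y \<longrightarrow> f y = 0) \<and> a = (\<Sum>y\<in>Y. f y))"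

definition invariants ::
  "'g set \<Rightarrow> ('g \<Rightarrow> 'g) \<Rightarrow> ('g \<Rightarrow> 'r \<Rightarrow> 'r) \<Rightarrow> ('g \<Rightarrow> 'r::ring) \<Rightarrow> 'r set" where
  "invariants G i \<alpha> one = {a. \<forall>g\<in>G. \<alpha> g (a * one (i g)) = a * one g}"

end

theory Submission
  imports Defs
begin

text \<open>
  Call a morphism u global if \<open>\<alpha>\<^sub>u\<close> is an isomorphism from all of \<open>S\<^bsub>s(u)\<^esub>\<close> onto all
  of \<open>S\<^bsub>t(u)\<^esub>\<close>; the group-type condition says exactly that every \<open>\<tau>\<^sub>y\<close> is global.
  Composing with global morphisms does not shrink domains, so for \<open>k = u\<^sup>-\<^sup>1 g h\<close> with h, u
  global, \<open>\<alpha>\<^sub>g \<alpha>\<^sub>h\<close> and \<open>\<alpha>\<^sub>u \<alpha>\<^sub>k\<close> agree on \<open>S\<^bsub>k\<^sup>-\<^sup>1\<^esub>\<close>, while \<open>\<alpha>\<^sub>h\<close> maps \<open>1\<^bsub>k\<^sup>-\<^sup>1\<^esub>\<close> to \<open>1\<^bsub>g\<^sup>-\<^sup>1\<^esub>\<close>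
  and \<open>\<alpha>\<^sub>u\<close> maps \<open>1\<^sub>k\<close> to \<open>1\<^sub>g\<close> (ring isomorphisms between unital ideals preserve units).
  With \<open>h = \<tau>\<^bsub>s(g)\<^esub>\<close> and \<open>u = \<tau>\<^bsub>t(g)\<^esub>\<close>, injectivity of \<open>\<alpha>\<^sub>u\<close> turns the invariance condition
  for g into the stated condition for \<open>\<tau>(g)\<close>. Finally, since S is the direct sum of the ideals
  \<open>S\<^sub>y\<close>, the products \<open>a 1\<^sub>g\<close> and \<open>a 1\<^bsub>g\<^sup>-\<^sup>1\<^esub>\<close> only see the components of a at t(g) and s(g).
\<close>

lemma ideal_of_mult_closed:
  assumes "ideal_of I J" and "a \<in> I" and "j \<in> J"
  shows "a * j \<in> I" and "j * a \<in> I"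
  using assms unfolding ideal_of_def by blast+

lemma internal_direct_sum_disjoint:
  fixes Sg :: "'g \<Rightarrow> 'r::ring set"
  assumes ds: "internal_direct_sum Y Sg" and "finite Y" and "\<forall>y\<in>Y. 0 \<in> Sg y"
    and "y1 \<in> Y" and "y2 \<in> Y" and "y1 \<noteq> y2" and "z \<in> Sg y1" and "z \<in> Sg y2"
  shows "z = 0"
proof -
  define f1 where "f1 v = (if v = y1 then z else 0)" for v
  define f2 where "f2 v = (if v = y2 then z else 0)" for v
  have "(\<forall>y\<in>Y. f y \<in> Sg y) \<and> (\<forall>y. y \<notin> Y \<longrightarrow> f y = 0) \<and> z = (\<Sum>y\<in>Y. f y)"
    if "f = f1 \<or> f = f2" for f
    using that assms unfolding f1_def f2_def by (auto simp: sum.delta)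
  then have "f1 = f2"
    using ds unfolding internal_direct_sum_def by metis
  then have "f1 y1 = f2 y1" by simp
  with \<open>y1 \<noteq> y2\<close> show ?thesis unfolding f1_def f2_def by simp
qed

lemma internal_direct_sum_mult_component:
  fixes Sg :: "'g \<Rightarrow> 'r::ring set"
  assumes ds: "internal_direct_sum Y Sg" and fin: "finite Y"
    and ideals: "\<forall>y\<in>Y. ideal_of (Sg y) UNIV" and f: "\<forall>y\<in>Y. f y \<in> Sg y"
    and y0: "y0 \<in> Y" and e: "e \<in> Sg y0"
  shows "(\<Sum>y\<in>Y. f y) * e = f y0 * e"
proof -
  have "f y * e = 0" if y: "y \<in> Y - {y0}" for y
  proof -
    have "f y * e \<in> Sg y" "f y * e \<in> Sg y0"
      using ideal_of_mult_closed ideals f y y0 e by blast+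
    moreover have "\<forall>y\<in>Y. 0 \<in> Sg y"
      using ideals unfolding ideal_of_def by blast
    ultimately show ?thesis
      using internal_direct_sum_disjoint[OF ds fin] y y0 by blast
  qed
  then have "(\<Sum>y\<in>Y - {y0}. f y * e) = 0"
    by simp
  then show ?thesis
    by (simp add: sum.remove[OF fin y0] distrib_right sum_distrib_right)
qed

lemma internal_direct_sum_transfer:
  fixes Sg :: "'g \<Rightarrow> 'r::ring set"
  assumes ds: "internal_direct_sum Y Sg" and bij: "\<And>y. y \<in> Y \<Longrightarrow> bij_betw (\<phi> y) A (Sg y)"
  shows "\<exists>!c. (\<forall>y\<in>Y. c y \<in> A) \<and> (\<forall>y. y \<notin> Y \<longrightarrow> c y = 0) \<and> a = (\<Sum>y\<in>Y. \<phi> y (c y))"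
    (is "\<exists>!c. ?P c")
proof (rule ex_ex1I)
  obtain f where f: "\<forall>y\<in>Y. f y \<in> Sg y" "\<forall>y. y \<notin> Y \<longrightarrow> f y = 0" "a = (\<Sum>y\<in>Y. f y)"
    using ds unfolding internal_direct_sum_def by blast
  define c where "c y = (if y \<in> Y then the_inv_into A (\<phi> y) (f y) else 0)" for y
  have "c y \<in> A \<and> \<phi> y (c y) = f y" if "y \<in> Y" for y
    using bij[OF that] f(1) that unfolding c_def bij_betw_def
    by (auto intro: the_inv_into_into f_the_inv_into_f)
  with f(3) show "\<exists>c. ?P c"
    by (intro exI[of _ c]) (auto simp: c_def intro: sum.cong)
next
  define Q where "Q f \<longleftrightarrow> (\<forall>y\<in>Y. f y \<in> Sg y) \<and> (\<forall>y. y \<notin> Y \<longrightarrow> f y = 0) \<and> a = (\<Sum>y\<in>Y. f y)"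
    for f
  let ?f = "\<lambda>c y. if y \<in> Y then \<phi> y (c y) else 0"
  have components: "Q (?f c)" if "?P c" for c
    using that bij_betwE[OF bij] unfolding Q_def by simp
  have "\<exists>!f. Q f"
    using ds unfolding internal_direct_sum_def Q_def by blast
  fix c1 c2
  assume c1: "?P c1" and c2: "?P c2"
  with \<open>\<exists>!f. Q f\<close> have "?f c1 = ?f c2"
    using components by blast
  show "c1 = c2"
  proof
    fix y
    show "c1 y = c2 y"
    proof (cases "y \<in> Y")
      case True
      with fun_cong[OF \<open>?f c1 = ?f c2\<close>, of y] have "\<phi> y (c1 y) = \<phi> y (c2 y)"
        by simp
      with True c1 c2 bij show ?thesis
        unfolding bij_betw_def by (blast dest: inj_onD)
    qed (use c1 c2 in simp)
  qed
qed

locale groupoid_struct =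
  fixes G :: "'g set" and s t :: "'g \<Rightarrow> 'g" and m :: "'g \<Rightarrow> 'g \<Rightarrow> 'g" and i :: "'g \<Rightarrow> 'g"
  assumes groupoid: "groupoid G s t m i"
begin

lemma source_closed [simp]: "g \<in> G \<Longrightarrow> s g \<in> G"
  and target_closed [simp]: "g \<in> G \<Longrightarrow> t g \<in> G"
  and source_source [simp]: "g \<in> G \<Longrightarrow> s (s g) = s g"
  and target_source [simp]: "g \<in> G \<Longrightarrow> t (s g) = s g"
  and source_target [simp]: "g \<in> G \<Longrightarrow> s (t g) = t g"
  and target_target [simp]: "g \<in> G \<Longrightarrow> t (t g) = t g"
  using groupoid unfolding groupoid_def by blast+

lemma comp_closed [simp]: "g \<in> G \<Longrightarrow> h \<in> G \<Longrightarrow> s g = t h \<Longrightarrow> m g h \<in> G"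
  and source_comp [simp]: "g \<in> G \<Longrightarrow> h \<in> G \<Longrightarrow> s g = t h \<Longrightarrow> s (m g h) = s h"
  and target_comp [simp]: "g \<in> G \<Longrightarrow> h \<in> G \<Longrightarrow> s g = t h \<Longrightarrow> t (m g h) = t g"
  using groupoid unfolding groupoid_def by blast+

lemma comp_assoc:
  "g \<in> G \<Longrightarrow> h \<in> G \<Longrightarrow> k \<in> G \<Longrightarrow> s g = t h \<Longrightarrow> s h = t k \<Longrightarrow> m (m g h) k = m g (m h k)"
  using groupoid unfolding groupoid_def by blast

lemma comp_target_left [simp]: "g \<in> G \<Longrightarrow> m (t g) g = g"
  and comp_source_right [simp]: "g \<in> G \<Longrightarrow> m g (s g) = g"
  using groupoid unfolding groupoid_def by blast+

lemma inv_closed [simp]: "g \<in> G \<Longrightarrow> i g \<in> G"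
  and source_inv [simp]: "g \<in> G \<Longrightarrow> s (i g) = t g"
  and target_inv [simp]: "g \<in> G \<Longrightarrow> t (i g) = s g"
  and comp_inv_right [simp]: "g \<in> G \<Longrightarrow> m g (i g) = t g"
  and comp_inv_left [simp]: "g \<in> G \<Longrightarrow> m (i g) g = s g"
  using groupoid unfolding groupoid_def by blast+

lemma objects_memD: "y \<in> objects G s \<Longrightarrow> y \<in> G \<and> s y = y \<and> t y = y"
  unfolding objects_def by auto

lemma source_in_objects: "g \<in> G \<Longrightarrow> s g \<in> objects G s"
  and target_in_objects: "g \<in> G \<Longrightarrow> t g \<in> objects G s"
  unfolding objects_def by (auto intro: image_eqI[of "t g" s "t g"])

lemma comp_inv_cancel_left: "u \<in> G \<Longrightarrow> q \<in> G \<Longrightarrow> t q = t u \<Longrightarrow> m u (m (i u) q) = q"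
  using comp_target_left[of q] by (simp flip: comp_assoc)

lemma inv_comp_cancel_left: "u \<in> G \<Longrightarrow> k \<in> G \<Longrightarrow> s u = t k \<Longrightarrow> m (i u) (m u k) = k"
  by (simp flip: comp_assoc)

lemma inv_unique:
  assumes "g \<in> G" "h \<in> G" "s h = t g" "m h g = s g"
  shows "h = i g"
proof -
  have "h = m h (m g (i g))"
    using assms comp_source_right[of h] by simp
  also have "\<dots> = m (m h g) (i g)"
    using assms comp_assoc[of h g "i g"] by simp
  also have "\<dots> = i g"
    using assms comp_target_left[of "i g"] by simp
  finally show ?thesis .
qed

lemma inv_inv [simp]: "g \<in> G \<Longrightarrow> i (i g) = g"
  using inv_unique[of "i g" g] by simp

lemma inv_comp:
  assumes "g \<in> G" "h \<in> G" "s g = t h"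
  shows "i (m g h) = m (i h) (i g)"
proof (rule inv_unique [symmetric])
  show "m (m (i h) (i g)) (m g h) = s (m g h)"
    using assms by (simp add: comp_assoc inv_comp_cancel_left)
qed (use assms in simp_all)

end

locale unital_groupoid_action = groupoid_struct G s t m i
  for G :: "'g set" and s t :: "'g \<Rightarrow> 'g" and m :: "'g \<Rightarrow> 'g \<Rightarrow> 'g" and i :: "'g \<Rightarrow> 'g" +
  fixes Sg :: "'g \<Rightarrow> 'r::ring set" and \<alpha> :: "'g \<Rightarrow> 'r \<Rightarrow> 'r" and one :: "'g \<Rightarrow> 'r"
  assumes partial_action: "partial_action G s t m i Sg \<alpha>"
    and unital: "unital_partial_action G Sg one"
begin

lemma target_ideal: "g \<in> G \<Longrightarrow> ideal_of (Sg (t g)) UNIV"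
  and dom_ideal: "g \<in> G \<Longrightarrow> ideal_of (Sg g) (Sg (t g))"
  using partial_action unfolding partial_action_def by blast+

lemma dom_subset_target: "g \<in> G \<Longrightarrow> Sg g \<subseteq> Sg (t g)"
  using dom_ideal unfolding ideal_of_def by blast

lemma action_bij: "g \<in> G \<Longrightarrow> bij_betw (\<alpha> g) (Sg (i g)) (Sg g)"
  using partial_action unfolding partial_action_def by blast

lemma action_mult: "g \<in> G \<Longrightarrow> a \<in> Sg (i g) \<Longrightarrow> b \<in> Sg (i g) \<Longrightarrow> \<alpha> g (a * b) = \<alpha> g a * \<alpha> g b"
  using partial_action unfolding partial_action_def by blast

lemma action_object: "y \<in> objects G s \<Longrightarrow> a \<in> Sg y \<Longrightarrow> \<alpha> y a = a"
  using partial_action unfolding partial_action_def by blast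

lemma action_comp:
  assumes "g \<in> G" "h \<in> G" "s g = t h" "a \<in> Sg (i h)" "\<alpha> h a \<in> Sg (i g)"
  shows "a \<in> Sg (i (m g h))" and "\<alpha> g (\<alpha> h a) = \<alpha> (m g h) a"
  using partial_action assms unfolding partial_action_def by blast+

lemma action_closed: "g \<in> G \<Longrightarrow> a \<in> Sg (i g) \<Longrightarrow> \<alpha> g a \<in> Sg g"
  using action_bij bij_betwE by blast

lemma action_image: "g \<in> G \<Longrightarrow> \<alpha> g ` Sg (i g) = Sg g"
  using action_bij bij_betw_imp_surj_on by blast

lemma action_inj: "g \<in> G \<Longrightarrow> inj_on (\<alpha> g) (Sg (i g))"
  using action_bij bij_betw_imp_inj_on by blast

lemma one_idem: "g \<in> G \<Longrightarrow> one g * one g = one g"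
  and one_commute: "g \<in> G \<Longrightarrow> a * one g = one g * a"
  and dom_eq: "g \<in> G \<Longrightarrow> Sg g = {a * one g | a. True}"
  using unital unfolding unital_partial_action_def central_idempotent_def by blast+

lemma mult_one_mem: "g \<in> G \<Longrightarrow> a * one g \<in> Sg g"
  using dom_eq by blast

lemma one_mem: "g \<in> G \<Longrightarrow> one g \<in> Sg g"
  using mult_one_mem[of g "one g"] one_idem by simp

lemma mult_one_right:
  assumes "g \<in> G" "b \<in> Sg g"
  shows "b * one g = b"
proof -
  obtain a where "b = a * one g"
    using assms dom_eq by blast
  with assms show ?thesis
    by (simp add: mult.assoc one_idem)
qed

lemma mult_one_left: "g \<in> G \<Longrightarrow> b \<in> Sg g \<Longrightarrow> one g * b = b"
  using mult_one_right one_commute by simp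

lemma action_inv_cancel:
  assumes "g \<in> G" "a \<in> Sg (i g)"
  shows "\<alpha> (i g) (\<alpha> g a) = a"
proof -
  have "\<alpha> g a \<in> Sg (i (i g))"
    using assms action_closed by simp
  then have "\<alpha> (i g) (\<alpha> g a) = \<alpha> (s g) a"
    using assms action_comp(2)[of "i g" g a] by simp
  also have "\<dots> = a"
    using assms dom_subset_target[of "i g"] source_in_objects action_object by auto
  finally show ?thesis .
qed

lemma action_maps_into_comp:
  assumes "p \<in> G" "q \<in> G" "s p = t q" "b \<in> Sg (i p)" "b \<in> Sg q"
  shows "\<alpha> p b \<in> Sg (m p q)"
proof -
  have "\<alpha> p b \<in> Sg (i (i p))" and "\<alpha> (i p) (\<alpha> p b) \<in> Sg (i (i q))"
    using assms action_closed action_inv_cancel by simp_all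
  then have "\<alpha> p b \<in> Sg (i (m (i q) (i p)))"
    using assms action_comp(1)[of "i q" "i p"] by simp
  with assms show ?thesis
    by (simp add: inv_comp)
qed

lemma action_comp_dom_iff:
  assumes "g \<in> G" "h \<in> G" "s g = t h" "a \<in> Sg (i h)"
  shows "\<alpha> h a \<in> Sg (i g) \<longleftrightarrow> a \<in> Sg (i (m g h))"
proof
  assume "a \<in> Sg (i (m g h))"
  with assms have "\<alpha> h a \<in> Sg (m h (i (m g h)))"
    by (intro action_maps_into_comp) auto
  with assms show "\<alpha> h a \<in> Sg (i g)"
    by (simp add: inv_comp comp_inv_cancel_left)
next
  assume "\<alpha> h a \<in> Sg (i g)"
  with assms show "a \<in> Sg (i (m g h))"
    by (rule action_comp(1))
qed

lemma action_unit:
  assumes "p \<in> G" "q \<in> G" "r \<in> G" "Sg q \<subseteq> Sg (i p)" "\<alpha> p ` Sg q = Sg r"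
  shows "\<alpha> p (one q) = one r"
proof -
  obtain w where w: "w \<in> Sg q" "one r = \<alpha> p w"
    using assms one_mem[of r] by blast
  have "\<alpha> p (one q) \<in> Sg r"
    using assms one_mem[of q] by blast
  then have "\<alpha> p (one q) = \<alpha> p (one q) * one r"
    using assms mult_one_right by simp
  also have "\<dots> = \<alpha> p (one q * w)"
    using assms w one_mem[of q] action_mult[of p "one q" w] by (simp add: subsetD)
  also have "\<dots> = one r"
    using assms w mult_one_left by simp
  finally show ?thesis .
qed

definition global :: "'g \<Rightarrow> bool" where
  "global u \<longleftrightarrow> u \<in> G \<and> Sg (i u) = Sg (s u) \<and> Sg u = Sg (t u)"

lemma global_comp_left:
  assumes u: "global u" and k: "k \<in> G" "s u = t k"
  shows "Sg (i (m u k)) = Sg (i k)"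
    and "a \<in> Sg (i k) \<Longrightarrow> \<alpha> (m u k) a = \<alpha> u (\<alpha> k a)"
proof -
  have uG: "u \<in> G" and Su: "Sg (i u) = Sg (s u)" "Sg u = Sg (t u)"
    using u unfolding global_def by auto
  have into_dom: "\<alpha> k a \<in> Sg (i u)" if "a \<in> Sg (i k)" for a
    using that k Su dom_subset_target[of k] action_closed by auto
  show "\<alpha> (m u k) a = \<alpha> u (\<alpha> k a)" if "a \<in> Sg (i k)"
    using action_comp(2)[OF uG k that into_dom[OF that]] by simp
  show "Sg (i (m u k)) = Sg (i k)"
  proof
    show "Sg (i k) \<subseteq> Sg (i (m u k))"
      using action_comp(1)[OF uG k _ into_dom] by blast
    show "Sg (i (m u k)) \<subseteq> Sg (i k)"
    proof
      fix a
      assume a: "a \<in> Sg (i (m u k))"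
      have "\<alpha> (m u k) a \<in> Sg (i (i u))"
        using a uG k Su action_closed[of "m u k" a] dom_subset_target[of "m u k"] by auto
      then have "a \<in> Sg (i (m (i u) (m u k)))"
        using a uG k action_comp(1)[of "i u" "m u k" a] by simp
      with uG k show "a \<in> Sg (i k)"
        by (simp add: inv_comp_cancel_left)
    qed
  qed
qed

lemma global_comp_right:
  assumes h: "global h" and g: "g \<in> G" "s g = t h"
  shows "\<alpha> h ` Sg (i (m g h)) = Sg (i g)"
    and "a \<in> Sg (i (m g h)) \<Longrightarrow> \<alpha> (m g h) a = \<alpha> g (\<alpha> h a)"
proof -
  have hG: "h \<in> G" and Sh: "Sg (i h) = Sg (s h)" "Sg h = Sg (t h)"
    using h unfolding global_def by auto
  have in_dom: "a \<in> Sg (i h)" if "a \<in> Sg (i (m g h))" for a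
    using that g hG Sh dom_subset_target[of "i (m g h)"] by auto
  have maps: "\<alpha> h a \<in> Sg (i g) \<longleftrightarrow> a \<in> Sg (i (m g h))" if "a \<in> Sg (i h)" for a
    using action_comp_dom_iff[OF g(1) hG g(2) that] .
  show "\<alpha> (m g h) a = \<alpha> g (\<alpha> h a)" if "a \<in> Sg (i (m g h))"
    using that in_dom maps action_comp(2)[OF g(1) hG g(2)] by simp
  show "\<alpha> h ` Sg (i (m g h)) = Sg (i g)"
  proof
    show "\<alpha> h ` Sg (i (m g h)) \<subseteq> Sg (i g)"
      using in_dom maps by blast
    show "Sg (i g) \<subseteq> \<alpha> h ` Sg (i (m g h))"
    proof
      fix b
      assume b: "b \<in> Sg (i g)"
      then have "b \<in> \<alpha> h ` Sg (i h)"
        using g hG Sh dom_subset_target[of "i g"] action_image[of h] by auto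
      with b maps show "b \<in> \<alpha> h ` Sg (i (m g h))"
        by blast
    qed
  qed
qed

lemma global_conj_factorization:
  assumes g: "g \<in> G" and h: "global h" "t h = s g" and u: "global u" "t u = t g"
  defines "k \<equiv> m (i u) (m g h)"
  shows "\<alpha> h ` Sg (i k) = Sg (i g)" and "\<alpha> u ` Sg k = Sg g"
    and "w \<in> Sg (i k) \<Longrightarrow> \<alpha> g (\<alpha> h w) = \<alpha> u (\<alpha> k w)"
proof -
  have hG: "h \<in> G" and uG: "u \<in> G"
    using h u unfolding global_def by auto
  have kG: "k \<in> G" and tk: "t k = s u" and uk: "m u k = m g h"
    using g hG uG h u by (simp_all add: k_def comp_inv_cancel_left)
  have dom_k: "Sg (i (m g h)) = Sg (i k)"
    and comp_k: "\<And>w. w \<in> Sg (i k) \<Longrightarrow> \<alpha> (m g h) w = \<alpha> u (\<alpha> k w)"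
    using global_comp_left[OF u(1) kG] uG tk by (simp_all add: uk)
  show img_h: "\<alpha> h ` Sg (i k) = Sg (i g)"
    and comp_h: "\<And>w. w \<in> Sg (i k) \<Longrightarrow> \<alpha> g (\<alpha> h w) = \<alpha> u (\<alpha> k w)"
    using global_comp_right[OF h(1) g] hG h(2) comp_k by (simp_all add: dom_k)
  have "Sg g = \<alpha> g ` \<alpha> h ` Sg (i k)"
    using g action_image img_h by simp
  also have "\<dots> = \<alpha> u ` \<alpha> k ` Sg (i k)"
    unfolding image_image using comp_h by (auto intro: image_cong)
  finally show "\<alpha> u ` Sg k = Sg g"
    using kG action_image by simp
qed

lemma global_conj_condition_iff:
  assumes g: "g \<in> G" and h: "global h" "t h = s g" and u: "global u" "t u = t g"
    and cy: "cy \<in> Sg (s h)" and cz: "cz \<in> Sg (s u)"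
  defines "k \<equiv> m (i u) (m g h)"
  shows "\<alpha> g (\<alpha> h cy * one (i g)) = \<alpha> u cz * one g \<longleftrightarrow>
         \<alpha> k (cy * one (i k)) = cz * one k"
proof -
  note img_h = global_conj_factorization(1)[OF g h u, folded k_def]
    and img_u = global_conj_factorization(2)[OF g h u, folded k_def]
    and comp = global_conj_factorization(3)[OF g h u, folded k_def]
  have hG: "h \<in> G" and Sh: "Sg (i h) = Sg (s h)"
    and uG: "u \<in> G" and Su: "Sg (i u) = Sg (s u)"
    using h u unfolding global_def by auto
  have kG: "k \<in> G" and sk: "s k = s h" and tk: "t k = s u"
    using g hG uG h u by (simp_all add: k_def)
  have Sik: "Sg (i k) \<subseteq> Sg (i h)"
    using dom_subset_target[of "i k"] kG sk Sh by simp
  have Sk: "Sg k \<subseteq> Sg (i u)"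
    using dom_subset_target[of k] kG tk Su by simp
  have unit_h: "\<alpha> h (one (i k)) = one (i g)"
    using action_unit[OF hG _ _ Sik img_h] kG g by simp
  have unit_u: "\<alpha> u (one k) = one g"
    using action_unit[OF uG kG g Sk img_u] .
  define w where "w = cy * one (i k)"
  have w: "w \<in> Sg (i k)"
    unfolding w_def using kG mult_one_mem by simp
  have "\<alpha> g (\<alpha> h cy * one (i g)) = \<alpha> g (\<alpha> h w)"
    using hG cy Sh Sik kG one_mem[of "i k"] action_mult[of h cy "one (i k)"]
    by (auto simp: w_def unit_h)
  also have "\<dots> = \<alpha> u (\<alpha> k w)"
    using comp[OF w] .
  finally have lhs: "\<alpha> g (\<alpha> h cy * one (i g)) = \<alpha> u (\<alpha> k w)" .
  have rhs: "\<alpha> u cz * one g = \<alpha> u (cz * one k)"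
    using uG cz Su Sk kG one_mem[of k] action_mult[of u cz "one k"] by (auto simp: unit_u)
  have "\<alpha> k w \<in> Sg (i u)"
    using w kG Sk action_closed by auto
  moreover have "cz * one k \<in> Sg (i u)"
    using ideal_of_mult_closed(1)[OF target_ideal[OF kG], of cz "one k"] cz tk Su by simp
  ultimately show ?thesis
    unfolding lhs rhs w_def[symmetric] using inj_on_eq_iff[OF action_inj[OF uG]] by blast
qed

lemma invariants_iff_components:
  assumes ds: "internal_direct_sum (objects G s) Sg" and fin: "finite (objects G s)"
    and f: "\<forall>y\<in>objects G s. f y \<in> Sg y"
  shows "(\<Sum>y\<in>objects G s. f y) \<in> invariants G i \<alpha> one \<longleftrightarrow>
         (\<forall>g\<in>G. \<alpha> g (f (s g) * one (i g)) = f (t g) * one g)"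
proof -
  have ideals: "\<forall>y\<in>objects G s. ideal_of (Sg y) UNIV"
    using objects_memD target_ideal by metis
  note component = internal_direct_sum_mult_component[OF ds fin ideals f]
  have "(\<Sum>y\<in>objects G s. f y) * one (i g) = f (s g) * one (i g)"
    and "(\<Sum>y\<in>objects G s. f y) * one g = f (t g) * one g" if g: "g \<in> G" for g
    using g one_mem dom_subset_target[of "i g"] dom_subset_target[of g]
    by (auto intro!: component source_in_objects target_in_objects)
  then show ?thesis
    unfolding invariants_def by auto
qed

end

theorem proposition3p1:
  fixes G :: "'g set" and s t :: "'g \<Rightarrow> 'g" and m :: "'g \<Rightarrow> 'g \<Rightarrow> 'g" and i :: "'g \<Rightarrow> 'g"
    and Sg :: "'g \<Rightarrow> 'r::ring set" and \<alpha> :: "'g \<Rightarrow> 'r \<Rightarrow> 'r" and one :: "'g \<Rightarrow> 'r"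
    and x :: 'g and \<tau> :: "'g \<Rightarrow> 'g"
  assumes "groupoid G s t m i" and "finite G" and "connected_groupoid G s t"
    and "partial_action G s t m i Sg \<alpha>"
    and "unital_partial_action G Sg one"
    and "group_type G s t i Sg"
    and "internal_direct_sum (objects G s) Sg"
    and "x \<in> objects G s" and "transversal G s t x \<tau>"
    and "\<forall>y\<in>objects G s. Sg (i (\<tau> y)) = Sg x \<and> Sg (\<tau> y) = Sg y"
  shows "(\<forall>a. \<exists>!c. (\<forall>y\<in>objects G s. c y \<in> Sg x) \<and> (\<forall>y. y \<notin> objects G s \<longrightarrow> c y = 0)
                 \<and> a = (\<Sum>y\<in>objects G s. \<alpha> (\<tau> y) (c y)))
       \<and> (\<forall>a c. (\<forall>y\<in>objects G s. c y \<in> Sg x) \<and> (\<forall>y. y \<notin> objects G s \<longrightarrow> c y = 0)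
                 \<and> a = (\<Sum>y\<in>objects G s. \<alpha> (\<tau> y) (c y)) \<longrightarrow>
           (a \<in> invariants G i \<alpha> one \<longleftrightarrow>
             (\<forall>g\<in>G. let \<tau>g = m (i (\<tau> (t g))) (m g (\<tau> (s g))) in
                \<alpha> \<tau>g (c (s g) * one (i \<tau>g)) = c (t g) * one \<tau>g)))"
proof -
  interpret unital_groupoid_action G s t m i Sg \<alpha> one
    using assms(1,4,5) by unfold_locales
  have fin: "finite (objects G s)"
    unfolding objects_def using assms(2) by simp
  have \<tau>: "global (\<tau> y) \<and> s (\<tau> y) = x \<and> t (\<tau> y) = y" if "y \<in> objects G s" for y
    using that assms(8-10) objects_memD unfolding transversal_def global_def by metis
  have bij: "bij_betw (\<alpha> (\<tau> y)) (Sg x) (Sg y)" if "y \<in> objects G s" for y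
    using that \<tau> assms(10) action_bij unfolding global_def by metis
  show ?thesis
  proof (intro conjI allI impI)
    show "\<exists>!c. (\<forall>y\<in>objects G s. c y \<in> Sg x) \<and> (\<forall>y. y \<notin> objects G s \<longrightarrow> c y = 0)
                 \<and> a = (\<Sum>y\<in>objects G s. \<alpha> (\<tau> y) (c y))" for a
      using internal_direct_sum_transfer[OF assms(7) bij] .
  next
    fix a c
    assume c: "(\<forall>y\<in>objects G s. c y \<in> Sg x) \<and> (\<forall>y. y \<notin> objects G s \<longrightarrow> c y = 0)
                 \<and> a = (\<Sum>y\<in>objects G s. \<alpha> (\<tau> y) (c y))"
    then have "\<forall>y\<in>objects G s. \<alpha> (\<tau> y) (c y) \<in> Sg y"
      using bij bij_betwE by blast
    with c have "a \<in> invariants G i \<alpha> one \<longleftrightarrow>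
      (\<forall>g\<in>G. \<alpha> g (\<alpha> (\<tau> (s g)) (c (s g)) * one (i g)) = \<alpha> (\<tau> (t g)) (c (t g)) * one g)"
      using invariants_iff_components[OF assms(7) fin] by simp
    also have "\<dots> \<longleftrightarrow> (\<forall>g\<in>G. let \<tau>g = m (i (\<tau> (t g))) (m g (\<tau> (s g))) in
                \<alpha> \<tau>g (c (s g) * one (i \<tau>g)) = c (t g) * one \<tau>g)"
      using c \<tau> source_in_objects target_in_objects
      by (simp add: Let_def global_conj_condition_iff)
    finally show "a \<in> invariants G i \<alpha> one \<longleftrightarrow> \<dots>" .
  qed
qed

end
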